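(* Let $p$ be a prime, $H_p=\mathbb{Z}[1/p]$, and for $\lambda\in(0,\infty)$ let $f_+(\lambda)=\sum_{m=0}^\infty\max(0,1-p^m\lambda)$, $f_-(\lambda)=\sum_{m=1}^\infty\max(0,p^{-m}\lambda-1)$. (i) The functions $f_\pm$ are convex, continuous, piecewise affine with slopes in $H_p$, and $f_+(p\lambda)-f_+(\lambda)=-\max(0,1-\lambda)$, $f_-(p\lambda)-f_-(\lambda)=\max(0,\lambda-1)$. (ii) The function $\theta=f_++f_-$ on $(0,\infty)$ is convex, continuous, piecewise affine with slopes in $H_p$, and satisfies $\theta(p\lambda)=\theta(\lambda)+\lambda-1$ for all $\lambda\in(0,\infty)$. (iii) For all $\lambda\in(0,\infty)$, $\left|\theta(\lambda)-\left(\frac{1}{p-1}\lambda-\frac{\log\lambda}{\log p}\right)\right|\leq1$. *)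

theory Defs
  imports "HOL-Analysis.Analysis"
begin

definition Hp :: "nat \<Rightarrow> real set" where
  "Hp p = {of_int k / (real p) ^ n | k n. True}"

definition f_plus :: "nat \<Rightarrow> real \<Rightarrow> real" where
  "f_plus p lam = (\<Sum>m. max 0 (1 - (real p) ^ m * lam))"

definition f_minus :: "nat \<Rightarrow> real \<Rightarrow> real" where
  "f_minus p lam = (\<Sum>m. max 0 (lam / (real p) ^ (Suc m) - 1))"

definition theta :: "nat \<Rightarrow> real \<Rightarrow> real" where
  "theta p lam = f_plus p lam + f_minus p lam"

text \<open>f is piecewise affine on the open set S (an interval) with slopes in H:
  every compact subinterval [a,b] of S splits into finitely many closed subintervals
  on each of which f is affine with slope in H (breakpoints may accumulate at the
  boundary of S).\<close>
definition piecewise_affine_slopes_in :: "real set \<Rightarrow> real set \<Rightarrow> (real \<Rightarrow> real) \<Rightarrow> bool" where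
  "piecewise_affine_slopes_in H S f \<longleftrightarrow>
     (\<forall>a b. a < b \<and> {a..b} \<subseteq> S \<longrightarrow>
        (\<exists>(n::nat) (x::nat \<Rightarrow> real) (c::nat \<Rightarrow> real) (d::nat \<Rightarrow> real).
           x 0 = a \<and> x n = b \<and> (\<forall>i<n. x i < x (Suc i)) \<and>
           (\<forall>i<n. c i \<in> H \<and> (\<forall>t\<in>{x i..x (Suc i)}. f t = c i * t + d i))))"

end

theory Submission
  imports Defs
begin

text \<open>On every half-line \<open>[a, \<infinity>)\<close> with \<open>a > 0\<close> the series \<open>f\<^sub>+\<close>, and on every half-line
  \<open>(-\<infinity>, b]\<close> the series \<open>f\<^sub>-\<close>, is a finite sum of hinge functions \<open>max 0 (\<beta> (t - r))\<close> with
  kinks \<open>r\<close> at integer powers of \<open>p\<close> and slopes \<open>\<beta> = \<plusminus>p\<^sup>k\<close>. Hence both are convex (so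
  continuous) and piecewise affine with slopes in \<open>\<int>[1/p]\<close>; the functional equations come
  from shifting the summation index by one. For (iii), \<open>\<theta>(\<lambda>) - (\<lambda>/(p-1) - log\<^sub>p \<lambda>)\<close> is
  invariant under \<open>\<lambda> \<mapsto> p\<lambda>\<close>, so it suffices to bound it on \<open>[1, p]\<close>, where \<open>\<theta>\<close> vanishes and the
  concavity of the logarithm gives the bound.\<close>

lemma pow_eventually_gt:
  fixes x :: real
  assumes "1 < x"
  obtains N where "\<And>n. N \<le> n \<Longrightarrow> y < x ^ n"
proof -
  obtain N where N: "y < x ^ N"
    using real_arch_pow[OF assms] by blast
  have "y < x ^ n" if "N \<le> n" for n
    using N power_increasing[OF that, of x] assms by linarith
  then show thesis
    using that by blast
qed

lemma convex_on_max:
  assumes f: "convex_on S f" and g: "convex_on S g"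
  shows "convex_on S (\<lambda>x. max (f x) (g x))"
proof (rule convex_onI)
  fix t :: real and x y assume t: "0 < t" "t < 1" and xy: "x \<in> S" "y \<in> S"
  have "(1 - t) * f x + t * f y \<le> (1 - t) * max (f x) (g x) + t * max (f y) (g y)"
   and "(1 - t) * g x + t * g y \<le> (1 - t) * max (f x) (g x) + t * max (f y) (g y)"
    using t by (intro add_mono mult_left_mono; simp)+
  then show "max (f ((1 - t) *\<^sub>R x + t *\<^sub>R y)) (g ((1 - t) *\<^sub>R x + t *\<^sub>R y))
      \<le> (1 - t) * max (f x) (g x) + t * max (f y) (g y)"
    using convex_onD[OF f, of t x y] convex_onD[OF g, of t x y] t xy by simp
qed (use f convex_on_imp_convex in blast)

lemma convex_on_hinge: "convex_on S (\<lambda>t::real. max 0 (\<beta> * (t - r)))" if "convex S"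
proof (rule convex_on_max)
  show "convex_on S (\<lambda>t. 0)"
    using that by (simp add: convex_on_const)
  show "convex_on S (\<lambda>t. \<beta> * (t - r))"
    by (rule convex_onI) (simp_all add: that algebra_simps)
qed

lemma convex_on_sum_fun:
  fixes f :: "'i \<Rightarrow> 'a::real_vector \<Rightarrow> real"
  assumes "finite I" "convex S" "\<And>i. i \<in> I \<Longrightarrow> convex_on S (f i)"
  shows "convex_on S (\<lambda>x. \<Sum>i\<in>I. f i x)"
  using assms by (induction I rule: finite_induct) (auto simp: convex_on_const)

lemma convex_on_cong: "convex_on S g \<Longrightarrow> (\<And>x. x \<in> S \<Longrightarrow> f x = g x) \<Longrightarrow> convex_on S f"
  unfolding convex_on_def convex_def by auto

lemma convex_on_pairwise:
  assumes "convex S" "\<And>x y. x \<in> S \<Longrightarrow> y \<in> S \<Longrightarrow> \<exists>T. convex_on T f \<and> x \<in> T \<and> y \<in> T"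
  shows "convex_on S f"
proof (rule convex_onI[OF _ assms(1)])
  fix t :: real and x y assume "0 < t" "t < 1" "x \<in> S" "y \<in> S"
  then show "f ((1 - t) *\<^sub>R x + t *\<^sub>R y) \<le> (1 - t) * f x + t * f y"
    using assms(2) convex_onD by (metis less_eq_real_def)
qed

subsection \<open>Truncation and the functional equations\<close>

lemma f_plus_terms_vanish:
  assumes "1 < p" "0 < a"
  obtains M where "\<And>m t. M \<le> m \<Longrightarrow> a \<le> t \<Longrightarrow> max 0 (1 - real p ^ m * t) = 0"
proof -
  obtain M where M: "\<And>m. M \<le> m \<Longrightarrow> 1 / a < real p ^ m"
    using pow_eventually_gt[of "real p"] assms(1) by auto
  have "max 0 (1 - real p ^ m * t) = 0" if "M \<le> m" "a \<le> t" for m t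
  proof -
    have "1 < real p ^ m * a"
      using M[OF that(1)] assms(2) by (simp add: field_simps)
    also have "\<dots> \<le> real p ^ m * t"
      using that(2) by (simp add: mult_left_mono)
    finally show ?thesis by simp
  qed
  then show thesis
    using that by blast
qed

lemma f_minus_terms_vanish:
  assumes "1 < p"
  obtains M where "\<And>m t. M \<le> m \<Longrightarrow> t \<le> b \<Longrightarrow> max 0 (t / real p ^ Suc m - 1) = 0"
proof -
  obtain M where M: "\<And>m. M \<le> m \<Longrightarrow> b < real p ^ m"
    using pow_eventually_gt[of "real p"] assms by auto
  have "max 0 (t / real p ^ Suc m - 1) = 0" if "M \<le> m" "t \<le> b" for m t
    using M[of "Suc m"] that assms by (simp add: field_simps)
  then show thesis
    using that by blast
qed

lemma f_plus_eq_sum: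
  assumes "1 < p" "0 < a"
  obtains M where "\<And>t. a \<le> t \<Longrightarrow> f_plus p t = (\<Sum>m<M. max 0 (1 - real p ^ m * t))"
proof -
  obtain M where M: "\<And>m t. M \<le> m \<Longrightarrow> a \<le> t \<Longrightarrow> max 0 (1 - real p ^ m * t) = 0"
    using f_plus_terms_vanish[OF assms] by blast
  have "f_plus p t = (\<Sum>m<M. max 0 (1 - real p ^ m * t))" if "a \<le> t" for t
    unfolding f_plus_def by (rule suminf_finite) (use M that in auto)
  then show thesis
    using that by blast
qed

lemma f_minus_eq_sum:
  assumes "1 < p"
  obtains M where "\<And>t. t \<le> b \<Longrightarrow> f_minus p t = (\<Sum>m<M. max 0 (t / real p ^ Suc m - 1))"
proof -
  obtain M where M: "\<And>m t. M \<le> m \<Longrightarrow> t \<le> b \<Longrightarrow> max 0 (t / real p ^ Suc m - 1) = 0"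
    using f_minus_terms_vanish[OF assms] by blast
  have "f_minus p t = (\<Sum>m<M. max 0 (t / real p ^ Suc m - 1))" if "t \<le> b" for t
    unfolding f_minus_def by (rule suminf_finite) (use M that in auto)
  then show thesis
    using that by blast
qed

lemma summable_f_plus_terms:
  assumes "1 < p" "0 < t"
  shows "summable (\<lambda>m. max 0 (1 - real p ^ m * t))"
proof -
  obtain M where "\<And>m s. M \<le> m \<Longrightarrow> t \<le> s \<Longrightarrow> max 0 (1 - real p ^ m * s) = 0"
    using f_plus_terms_vanish[OF assms] by blast
  then show ?thesis
    by (intro summable_finite[of "{..<M}"]) (simp_all add: not_less)
qed

lemma summable_f_minus_terms:
  assumes "1 < p"
  shows "summable (\<lambda>m. max 0 (t / real p ^ Suc m - 1))"
proof -
  obtain M where "\<And>m s. M \<le> m \<Longrightarrow> s \<le> t \<Longrightarrow> max 0 (s / real p ^ Suc m - 1) = 0"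
    using f_minus_terms_vanish[OF assms] by blast
  then show ?thesis
    by (intro summable_finite[of "{..<M}"]) (simp_all add: not_less)
qed

lemma f_plus_mult:
  assumes "1 < p" "0 < lam"
  shows "f_plus p (real p * lam) = f_plus p lam - max 0 (1 - lam)"
proof -
  have "f_plus p (real p * lam) = (\<Sum>m. max 0 (1 - real p ^ Suc m * lam))"
    unfolding f_plus_def by (simp add: mult.assoc mult.left_commute)
  then show ?thesis
    using suminf_split_head[OF summable_f_plus_terms[OF assms]] unfolding f_plus_def by simp
qed

lemma f_minus_mult:
  assumes "1 < p"
  shows "f_minus p (real p * lam) = f_minus p lam + max 0 (lam - 1)"
proof -
  let ?g = "\<lambda>m. max 0 (lam / real p ^ m - 1)"
  have "summable ?g"
    using summable_f_minus_terms[OF assms, of lam] by (rule summable_Suc_iff[THEN iffD1])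
  moreover have "f_minus p (real p * lam) = (\<Sum>m. ?g m)"
    unfolding f_minus_def using assms by simp
  ultimately show ?thesis
    using suminf_split_head[of ?g] unfolding f_minus_def by simp
qed

lemma theta_mult:
  assumes "1 < p" "0 < lam"
  shows "theta p (real p * lam) = theta p lam + lam - 1"
  using f_plus_mult[OF assms] f_minus_mult[OF assms(1), of lam] unfolding theta_def by linarith

subsection \<open>Convexity\<close>

lemma convex_on_f_plus_atLeast:
  assumes "1 < p" "0 < a"
  shows "convex_on {a..} (f_plus p)"
proof -
  obtain M where M: "\<And>t. a \<le> t \<Longrightarrow> f_plus p t = (\<Sum>m<M. max 0 (1 - real p ^ m * t))"
    using f_plus_eq_sum[OF assms] by blast
  have "convex_on {a..} (\<lambda>t. \<Sum>m<M. max 0 (- (real p ^ m) * (t - 1 / real p ^ m)))"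
    by (intro convex_on_sum_fun convex_on_hinge) auto
  then show ?thesis
    by (rule convex_on_cong) (use M assms(1) in \<open>simp add: algebra_simps\<close>)
qed

lemma convex_on_f_plus:
  assumes "1 < p"
  shows "convex_on {0<..} (f_plus p)"
proof (rule convex_on_pairwise)
  fix x y :: real assume "x \<in> {0<..}" "y \<in> {0<..}"
  then show "\<exists>T. convex_on T (f_plus p) \<and> x \<in> T \<and> y \<in> T"
    using convex_on_f_plus_atLeast[OF assms, of "min x y"] by auto
qed simp

lemma convex_on_f_minus_atMost:
  assumes "1 < p"
  shows "convex_on {..b} (f_minus p)"
proof -
  obtain M where M: "\<And>t. t \<le> b \<Longrightarrow> f_minus p t = (\<Sum>m<M. max 0 (t / real p ^ Suc m - 1))"
    using f_minus_eq_sum[OF assms] by blast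
  have "convex_on {..b} (\<lambda>t. \<Sum>m<M. max 0 ((1 / real p ^ Suc m) * (t - real p ^ Suc m)))"
    by (intro convex_on_sum_fun convex_on_hinge) auto
  then show ?thesis
    by (rule convex_on_cong) (use M assms in \<open>simp add: field_simps\<close>)
qed

lemma convex_on_f_minus:
  assumes "1 < p"
  shows "convex_on UNIV (f_minus p)"
proof (rule convex_on_pairwise)
  fix x y :: real
  show "\<exists>T. convex_on T (f_minus p) \<and> x \<in> T \<and> y \<in> T"
    using convex_on_f_minus_atMost[OF assms, of "max x y"] by auto
qed simp

subsection \<open>Piecewise affinity\<close>

definition affine_on_slope_in :: "real set \<Rightarrow> real set \<Rightarrow> (real \<Rightarrow> real) \<Rightarrow> bool" where
  "affine_on_slope_in H S f \<longleftrightarrow> (\<exists>c\<in>H. \<exists>d. \<forall>t\<in>S. f t = c * t + d)"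

definition piecewise_affine_on_Icc :: "real set \<Rightarrow> real \<Rightarrow> real \<Rightarrow> (real \<Rightarrow> real) \<Rightarrow> bool" where
  "piecewise_affine_on_Icc H a b f \<longleftrightarrow>
     (\<exists>(n::nat) (x::nat \<Rightarrow> real) (c::nat \<Rightarrow> real) (d::nat \<Rightarrow> real).
        x 0 = a \<and> x n = b \<and> (\<forall>i<n. x i < x (Suc i)) \<and>
        (\<forall>i<n. c i \<in> H \<and> (\<forall>t\<in>{x i..x (Suc i)}. f t = c i * t + d i)))"

lemma piecewise_affine_slopes_in_iff:
  "piecewise_affine_slopes_in H S f \<longleftrightarrow>
     (\<forall>a b. a < b \<and> {a..b} \<subseteq> S \<longrightarrow> piecewise_affine_on_Icc H a b f)"
  unfolding piecewise_affine_slopes_in_def piecewise_affine_on_Icc_def ..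

lemma piecewise_affine_on_IccI:
  assumes "a < b" "affine_on_slope_in H {a..b} f"
  shows "piecewise_affine_on_Icc H a b f"
proof -
  obtain c d where "c \<in> H" "\<forall>t\<in>{a..b}. f t = c * t + d"
    using assms(2) unfolding affine_on_slope_in_def by blast
  then show ?thesis
    unfolding piecewise_affine_on_Icc_def using assms(1)
    by (intro exI[of _ 1] exI[of _ "\<lambda>i. if i = 0 then a else b"] exI[of _ "\<lambda>_. c"]
        exI[of _ "\<lambda>_. d"]) auto
qed

lemma piecewise_affine_on_Icc_trans:
  assumes "piecewise_affine_on_Icc H a q f" "piecewise_affine_on_Icc H q b f"
  shows "piecewise_affine_on_Icc H a b f"
proof -
  obtain n1 x1 c1 d1 where 1: "x1 0 = a" "x1 n1 = q" "\<forall>i<n1. x1 i < x1 (Suc i)"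
    "\<forall>i<n1. c1 i \<in> H \<and> (\<forall>t\<in>{x1 i..x1 (Suc i)}. f t = c1 i * t + d1 i)"
    using assms(1) unfolding piecewise_affine_on_Icc_def by blast
  obtain n2 x2 c2 d2 where 2: "x2 0 = q" "x2 n2 = b" "\<forall>i<n2. x2 i < x2 (Suc i)"
    "\<forall>i<n2. c2 i \<in> H \<and> (\<forall>t\<in>{x2 i..x2 (Suc i)}. f t = c2 i * t + d2 i)"
    using assms(2) unfolding piecewise_affine_on_Icc_def by blast
  define x where "x i = (if i \<le> n1 then x1 i else x2 (i - n1))" for i
  define c where "c i = (if i < n1 then c1 i else c2 (i - n1))" for i
  define d where "d i = (if i < n1 then d1 i else d2 (i - n1))" for i
  have x_right: "x i = x2 (i - n1)" if "n1 \<le> i" for i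
    using that 1(2) 2(1) by (cases "i = n1") (auto simp: x_def)
  have "x i < x (Suc i) \<and> c i \<in> H \<and> (\<forall>t\<in>{x i..x (Suc i)}. f t = c i * t + d i)"
    if "i < n1 + n2" for i
  proof (cases "i < n1")
    case True
    then show ?thesis using 1 by (simp add: x_def c_def d_def)
  next
    case False
    then have "x i = x2 (i - n1)" "x (Suc i) = x2 (Suc (i - n1))" "i - n1 < n2"
      using x_right[of i] x_right[of "Suc i"] that by (auto simp: Suc_diff_le)
    then show ?thesis using 2 False by (simp add: c_def d_def)
  qed
  moreover have "x 0 = a" "x (n1 + n2) = b"
    using 1 2 x_right[of "n1 + n2"] by (simp_all add: x_def)
  ultimately show ?thesis
    unfolding piecewise_affine_on_Icc_def by blast
qed

lemma piecewise_affine_slopes_inI: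
  assumes fin: "\<And>a b. {a..b} \<subseteq> S \<Longrightarrow> finite (K \<inter> {a<..<b})"
    and aff: "\<And>a b. a < b \<Longrightarrow> {a..b} \<subseteq> S \<Longrightarrow> K \<inter> {a<..<b} = {} \<Longrightarrow> affine_on_slope_in H {a..b} f"
  shows "piecewise_affine_slopes_in H S f"
  unfolding piecewise_affine_slopes_in_iff
proof (intro allI impI, elim conjE)
  fix a b assume "a < b" "{a..b} \<subseteq> S"
  then show "piecewise_affine_on_Icc H a b f"
  proof (induction "card (K \<inter> {a<..<b})" arbitrary: a b rule: less_induct)
    case less
    show ?case
    proof (cases "K \<inter> {a<..<b} = {}")
      case True
      then show ?thesis
        using aff less.prems by (blast intro: piecewise_affine_on_IccI)
    next
      case False
      then obtain q where q: "q \<in> K" "a < q" "q < b" by auto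
      have "card (K \<inter> {a<..<q}) < card (K \<inter> {a<..<b})"
       and "card (K \<inter> {q<..<b}) < card (K \<inter> {a<..<b})"
        using q by (auto intro!: psubset_card_mono fin[OF less.prems(2)])
      then have "piecewise_affine_on_Icc H a q f" "piecewise_affine_on_Icc H q b f"
        using less.hyps less.prems q by (metis atLeastatMost_subset_iff order.trans order.refl
            less_imp_le)+
      then show ?thesis
        by (rule piecewise_affine_on_Icc_trans)
    qed
  qed
qed

lemma affine_on_slope_in_cong:
  "affine_on_slope_in H S g \<Longrightarrow> (\<And>t. t \<in> S \<Longrightarrow> f t = g t) \<Longrightarrow> affine_on_slope_in H S f"
  unfolding affine_on_slope_in_def by auto

lemma affine_on_slope_in_add:
  assumes "\<And>x y. x \<in> H \<Longrightarrow> y \<in> H \<Longrightarrow> x + y \<in> H"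
    and "affine_on_slope_in H S f" "affine_on_slope_in H S g"
  shows "affine_on_slope_in H S (\<lambda>t. f t + g t)"
proof -
  obtain c d c' d' where "c \<in> H" "\<forall>t\<in>S. f t = c * t + d" "c' \<in> H" "\<forall>t\<in>S. g t = c' * t + d'"
    using assms(2,3) unfolding affine_on_slope_in_def by blast
  then show ?thesis
    unfolding affine_on_slope_in_def using assms(1)
    by (intro bexI[of _ "c + c'"] exI[of _ "d + d'"]) (auto simp: algebra_simps)
qed

lemma affine_on_slope_in_sum:
  assumes "0 \<in> H" "\<And>x y. x \<in> H \<Longrightarrow> y \<in> H \<Longrightarrow> x + y \<in> H"
    and "finite I" "\<And>i. i \<in> I \<Longrightarrow> affine_on_slope_in H S (f i)"
  shows "affine_on_slope_in H S (\<lambda>t. \<Sum>i\<in>I. f i t)"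
  using assms(3,4)
proof (induction I rule: finite_induct)
  case empty
  then show ?case
    unfolding affine_on_slope_in_def using assms(1) by (intro bexI[of _ 0]) auto
next
  case (insert i I)
  then show ?case
    using affine_on_slope_in_add[OF assms(2)] by simp
qed

lemma affine_on_slope_in_hinge:
  assumes "\<beta> \<in> H" "0 \<in> H" "r \<notin> {a<..<b}"
  shows "affine_on_slope_in H {a..b} (\<lambda>t. max 0 (\<beta> * (t - r)))"
proof -
  have "(\<forall>t\<in>{a..b}. 0 \<le> \<beta> * (t - r)) \<or> (\<forall>t\<in>{a..b}. \<beta> * (t - r) \<le> 0)"
    using assms(3) by (cases "0 \<le> \<beta>") (auto simp: zero_le_mult_iff mult_le_0_iff)
  then have "(\<forall>t\<in>{a..b}. max 0 (\<beta> * (t - r)) = \<beta> * t + - \<beta> * r)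
           \<or> (\<forall>t\<in>{a..b}. max 0 (\<beta> * (t - r)) = 0 * t + 0)"
    by (auto simp: algebra_simps)
  then show ?thesis
    unfolding affine_on_slope_in_def using assms(1,2) by blast
qed

lemma Hp_add:
  assumes "0 < p" "x \<in> Hp p" "y \<in> Hp p"
  shows "x + y \<in> Hp p"
proof -
  obtain k1 n1 k2 n2 where xy: "x = of_int k1 / real p ^ n1" "y = of_int k2 / real p ^ n2"
    using assms unfolding Hp_def by blast
  have "x + y = of_int (k1 * int p ^ n2 + k2 * int p ^ n1) / real p ^ (n1 + n2)"
    unfolding xy using assms(1) by (simp add: field_simps power_add)
  then show ?thesis
    unfolding Hp_def by blast
qed

lemma Hp_of_int: "real_of_int k \<in> Hp p"
  unfolding Hp_def by (rule CollectI, rule exI[of _ k], rule exI[of _ 0]) simp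

lemma Hp_divide_power: "real_of_int k / real p ^ n \<in> Hp p"
  unfolding Hp_def by blast

definition int_powers :: "nat \<Rightarrow> real set" where
  "int_powers p = range (\<lambda>m. real p ^ m) \<union> range (\<lambda>m. 1 / real p ^ m)"

lemma finite_int_powers_Int:
  assumes "1 < p" "0 < a"
  shows "finite (int_powers p \<inter> {a<..<b})"
proof -
  obtain N1 where N1: "\<And>m. N1 \<le> m \<Longrightarrow> b < real p ^ m"
    using pow_eventually_gt[of "real p"] assms(1) by auto
  obtain N2 where N2: "\<And>m. N2 \<le> m \<Longrightarrow> 1 / a < real p ^ m"
    using pow_eventually_gt[of "real p"] assms(1) by auto
  have "1 / real p ^ m < a" if "N2 \<le> m" for m
    using N2[OF that] assms by (simp add: field_simps)
  then have "int_powers p \<inter> {a<..<b} \<subseteq> (\<lambda>m. real p ^ m) ` {..<N1} \<union> (\<lambda>m. 1 / real p ^ m) ` {..<N2}"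
    using N1 unfolding int_powers_def by (force simp: not_less[symmetric])
  then show ?thesis
    by (rule finite_subset) auto
qed

lemma affine_on_slope_in_f_plus:
  assumes "1 < p" "0 < a" "int_powers p \<inter> {a<..<b} = {}"
  shows "affine_on_slope_in (Hp p) {a..b} (f_plus p)"
proof -
  obtain M where M: "\<And>t. a \<le> t \<Longrightarrow> f_plus p t = (\<Sum>m<M. max 0 (1 - real p ^ m * t))"
    using f_plus_eq_sum[OF assms(1,2)] by blast
  have "affine_on_slope_in (Hp p) {a..b}
      (\<lambda>t. \<Sum>m<M. max 0 (- (real p ^ m) * (t - 1 / real p ^ m)))"
  proof (intro affine_on_slope_in_sum affine_on_slope_in_hinge)
    fix m
    show "- (real p ^ m) \<in> Hp p"
      using Hp_of_int[of "- (int p ^ m)"] by simp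
    show "1 / real p ^ m \<notin> {a<..<b}"
      using assms(3) unfolding int_powers_def by blast
  qed (use Hp_of_int[of 0] Hp_add assms(1) in auto)
  then show ?thesis
    by (rule affine_on_slope_in_cong) (use M assms in \<open>simp add: algebra_simps\<close>)
qed

lemma affine_on_slope_in_f_minus:
  assumes "1 < p" "int_powers p \<inter> {a<..<b} = {}"
  shows "affine_on_slope_in (Hp p) {a..b} (f_minus p)"
proof -
  obtain M where M: "\<And>t. t \<le> b \<Longrightarrow> f_minus p t = (\<Sum>m<M. max 0 (t / real p ^ Suc m - 1))"
    using f_minus_eq_sum[OF assms(1)] by blast
  have "affine_on_slope_in (Hp p) {a..b}
      (\<lambda>t. \<Sum>m<M. max 0 ((1 / real p ^ Suc m) * (t - real p ^ Suc m)))"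
  proof (intro affine_on_slope_in_sum affine_on_slope_in_hinge)
    fix m
    show "1 / real p ^ Suc m \<in> Hp p"
      using Hp_divide_power[of 1 p "Suc m"] by simp
    show "real p ^ Suc m \<notin> {a<..<b}"
      using assms(2) unfolding int_powers_def by blast
  qed (use Hp_of_int[of 0] Hp_add assms(1) in auto)
  then show ?thesis
    by (rule affine_on_slope_in_cong) (use M assms in \<open>simp add: field_simps\<close>)
qed

lemma piecewise_affine_on_positive_reals:
  assumes "1 < p"
    and "\<And>a b. 0 < a \<Longrightarrow> int_powers p \<inter> {a<..<b} = {} \<Longrightarrow> affine_on_slope_in (Hp p) {a..b} f"
  shows "piecewise_affine_slopes_in (Hp p) {0<..} f"
proof (rule piecewise_affine_slopes_inI[where K = "int_powers p"])
  fix a b :: real assume "{a..b} \<subseteq> {0<..}"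
  then show "finite (int_powers p \<inter> {a<..<b})"
    by (cases "a \<le> b") (auto intro: finite_int_powers_Int[OF assms(1)])
next
  fix a b :: real assume "a < b" "{a..b} \<subseteq> {0<..}" "int_powers p \<inter> {a<..<b} = {}"
  moreover from this have "0 < a"
    using atLeastAtMost_iff by (metis greaterThan_iff less_imp_le order_refl subsetD)
  ultimately show "affine_on_slope_in (Hp p) {a..b} f"
    using assms(2) by blast
qed

lemma piecewise_affine_theta:
  assumes "1 < p"
  shows "piecewise_affine_slopes_in (Hp p) {0<..} (theta p)"
proof (rule piecewise_affine_on_positive_reals[OF assms])
  fix a b :: real assume "0 < a" "int_powers p \<inter> {a<..<b} = {}"
  then show "affine_on_slope_in (Hp p) {a..b} (theta p)"
    using affine_on_slope_in_add[OF Hp_add affine_on_slope_in_f_plus affine_on_slope_in_f_minus]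
      assms unfolding theta_def by auto
qed

subsection \<open>Comparison with \<open>\<lambda>/(p-1) - log\<^sub>p \<lambda>\<close>\<close>

lemma abs_le_if_mult_periodic:
  fixes g :: "real \<Rightarrow> real"
  assumes x: "1 < x" and periodic: "\<And>lam. 0 < lam \<Longrightarrow> g (x * lam) = g lam"
    and bound: "\<And>mu. 1 \<le> mu \<Longrightarrow> mu \<le> x \<Longrightarrow> \<bar>g mu\<bar> \<le> B" and "0 < lam"
  shows "\<bar>g lam\<bar> \<le> B"
proof -
  have pow: "g (x ^ n * mu) = g mu" if "0 < mu" for n mu
  proof (induction n)
    case (Suc n)
    have "g (x ^ Suc n * mu) = g (x * (x ^ n * mu))"
      by (simp add: mult.assoc)
    also have "\<dots> = g (x ^ n * mu)"
      using periodic \<open>0 < mu\<close> x by simp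
    finally show ?case
      using Suc.IH by simp
  qed simp
  define k where "k = \<lfloor>log x lam\<rfloor>"
  define mu where "mu = lam / x powr k"
  have "x powr k \<le> lam" "lam < x powr k * x"
    using floor_log_eq_powr_iff[of lam x k] \<open>0 < lam\<close> x by (auto simp: k_def powr_add)
  then have mu: "1 \<le> mu" "mu \<le> x"
    using x by (auto simp: mu_def field_simps)
  have "g lam = g mu"
  proof (cases "0 \<le> k")
    case True
    then have "lam = x ^ nat k * mu"
      using x by (simp add: mu_def flip: powr_realpow)
    then show ?thesis
      using pow mu by simp
  next
    case False
    then have "mu = x ^ nat (- k) * lam"
      using x by (simp add: mu_def powr_minus divide_inverse flip: powr_realpow)
    then show ?thesis
      using pow \<open>0 < lam\<close> by simp
  qed
  then show ?thesis
    using bound[OF mu] by simp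
qed

lemma theta_eq_0:
  assumes "1 < p" "1 \<le> mu" "mu \<le> real p"
  shows "theta p mu = 0"
proof -
  have "max 0 (1 - real p ^ m * mu) = 0" for m
    using mult_mono[of 1 "real p ^ m" 1 mu] assms by simp
  moreover have "max 0 (mu / real p ^ Suc m - 1) = 0" for m
  proof -
    have "real p * 1 \<le> real p * real p ^ m"
      using assms(1) by (intro mult_left_mono) auto
    then have "mu \<le> real p ^ Suc m"
      using assms(3) by simp
    then show ?thesis
      using assms(1) by (simp add: divide_le_eq_1)
  qed
  ultimately show ?thesis
    unfolding theta_def f_plus_def f_minus_def by simp
qed

lemma abs_linear_minus_log_le_1:
  fixes x mu :: real
  assumes "2 \<le> x" "1 \<le> mu" "mu \<le> x"
  shows "\<bar>mu / (x - 1) - ln mu / ln x\<bar> \<le> 1"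
proof -
  define t where "t = (mu - 1) / (x - 1)"
  have t: "0 \<le> t" "t \<le> 1"
    using assms by (auto simp: t_def field_simps)
  have mu: "mu = (1 - t) *\<^sub>R 1 + t *\<^sub>R x"
    using assms by (simp add: t_def algebra_simps) (simp add: field_simps)
  have "t * ln x \<le> ln mu"
    using concave_onD[OF ln_concave, of t 1 x] t mu assms by simp
  then have "t \<le> ln mu / ln x"
    using assms by (simp add: field_simps)
  moreover have "ln mu / ln x \<le> 1"
    using assms by simp
  moreover have "mu / (x - 1) = t + 1 / (x - 1)" "1 / (x - 1) \<le> 1" "0 \<le> mu / (x - 1)"
    using assms by (auto simp: t_def field_simps)
  ultimately show ?thesis
    by linarith
qed

lemma theta_log_bound:
  assumes "1 < p" "0 < lam"
  shows "\<bar>theta p lam - (lam / (real p - 1) - ln lam / ln (real p))\<bar> \<le> 1"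
proof (rule abs_le_if_mult_periodic[where x = "real p"
      and g = "\<lambda>l. theta p l - (l / (real p - 1) - ln l / ln (real p))"])
  fix lam :: real assume "0 < lam"
  then have "ln (real p * lam) / ln (real p) = 1 + ln lam / ln (real p)"
    using assms by (simp add: ln_mult add_divide_distrib)
  moreover have "real p * lam / (real p - 1) = lam / (real p - 1) + lam"
    using assms by (simp add: field_simps)
  ultimately show "theta p (real p * lam) - (real p * lam / (real p - 1) - ln (real p * lam) / ln (real p))
      = theta p lam - (lam / (real p - 1) - ln lam / ln (real p))"
    using theta_mult[OF assms(1) \<open>0 < lam\<close>] by simp
next
  fix mu assume "1 \<le> mu" "mu \<le> real p"
  then show "\<bar>theta p mu - (mu / (real p - 1) - ln mu / ln (real p))\<bar> \<le> 1"
    using theta_eq_0[OF assms(1)] abs_linear_minus_log_le_1[of "real p" mu] assms(1) by simp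
qed (use assms in auto)

theorem lemma5p10:
  fixes p :: nat
  assumes "prime p"
  shows
   "(convex_on {0<..} (f_plus p) \<and> continuous_on {0<..} (f_plus p) \<and>
     piecewise_affine_slopes_in (Hp p) {0<..} (f_plus p) \<and>
     convex_on {0<..} (f_minus p) \<and> continuous_on {0<..} (f_minus p) \<and>
     piecewise_affine_slopes_in (Hp p) {0<..} (f_minus p) \<and>
     (\<forall>lam::real. lam > 0 \<longrightarrow> f_plus p (real p * lam) - f_plus p lam = - max 0 (1 - lam)) \<and>
     (\<forall>lam::real. lam > 0 \<longrightarrow> f_minus p (real p * lam) - f_minus p lam = max 0 (lam - 1)))
  \<and> (convex_on {0<..} (theta p) \<and> continuous_on {0<..} (theta p) \<and>
     piecewise_affine_slopes_in (Hp p) {0<..} (theta p) \<and>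
     (\<forall>lam::real. lam > 0 \<longrightarrow> theta p (real p * lam) = theta p lam + lam - 1))
  \<and> (\<forall>lam::real. lam > 0 \<longrightarrow> \<bar>theta p lam - (lam / (real p - 1) - ln lam / ln (real p))\<bar> \<le> 1)"
proof -
  have p: "1 < p"
    using prime_gt_1_nat[OF assms] .
  have cvx_plus: "convex_on {0<..} (f_plus p)"
    using convex_on_f_plus[OF p] .
  have cvx_minus: "convex_on {0<..} (f_minus p)"
    using convex_on_subset[OF convex_on_f_minus[OF p]] by simp
  have cvx_theta: "convex_on {0<..} (theta p)"
    unfolding theta_def[abs_def] using cvx_plus cvx_minus by (rule convex_on_add)
  have "piecewise_affine_slopes_in (Hp p) {0<..} (f_plus p)"
       "piecewise_affine_slopes_in (Hp p) {0<..} (f_minus p)"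
    using piecewise_affine_on_positive_reals[OF p] affine_on_slope_in_f_plus[OF p]
      affine_on_slope_in_f_minus[OF p] by auto
  then show ?thesis
    using cvx_plus cvx_minus cvx_theta piecewise_affine_theta[OF p] theta_mult[OF p]
      f_plus_mult[OF p] f_minus_mult[OF p] theta_log_bound[OF p]
      convex_on_continuous[OF open_greaterThan cvx_plus]
      convex_on_continuous[OF open_greaterThan cvx_minus]
      convex_on_continuous[OF open_greaterThan cvx_theta] by simp
qed

end
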